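(* For $k\ge2$ the polynomial $P_k(x)$ has integer coefficients. If $\ell>3$ is prime, then $$P_{\frac{\ell+1}{2}}(x)\equiv\frac{\ell+1}{2}\left(1+(1-24x)^{\frac{\ell-1}{2}}\right)\pmod{\ell}$$ (coefficientwise).
   Context: $P_k(x)\in\mathbb{Q}[x]$ is defined by $P_0:=0$, $P_1:=1$, and for $k\ge2$, $P_k(x):=-\frac{1}{(2k-1)(k-1)}\sum_{i=1}^{k-1}\left(6x\binom{2k}{2i}(2^{2i-1}-1)+\binom{2k}{2i+2}(2^{2i+1}-1)-2^{2i}\binom{2k}{2i+1}+\binom{2k}{2i}\right)P_{k-i}(x)$. *)

theory Defs
  imports "HOL-Computational_Algebra.Polynomial"
begin

function P :: "nat \<Rightarrow> rat poly" where
  "P k = (if k = 0 then 0 else if k = 1 then 1 else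
     smult (- 1 / (of_nat (2 * k - 1) * of_nat (k - 1)))
       (\<Sum>i = 1..k - 1.
          ([:0, 6 * of_nat ((2 * k) choose (2 * i)) * (2 ^ (2 * i - 1) - 1):]
           + [: of_nat ((2 * k) choose (2 * i + 2)) * (2 ^ (2 * i + 1) - 1)
                - 2 ^ (2 * i) * of_nat ((2 * k) choose (2 * i + 1))
                + of_nat ((2 * k) choose (2 * i)) :]) * P (k - i)))"
  by auto
termination
  by (relation "measure id") auto

end

theory Submission
  imports Defs "HOL-Computational_Algebra.Primes"
begin

text \<open>
  Put \<open>x = a (1 - a) / 6\<close>. Expanding \<open>(a \<plusminus> 1)^(2k)\<close> and \<open>(a \<plusminus> 2)^(2k)\<close> binomially
  shows that \<open>\<Sum>i\<le>k. w\<^sub>k\<^sub>i(x) a^(2(k - i))\<close>, where \<open>w\<^sub>k\<^sub>i\<close> are the weights of the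
  recurrence, is invariant under \<open>a \<mapsto> 1 - a\<close>; by induction this gives
  \<open>(2a - 1) P_k(x) = a^(2k) - (1 - a)^(2k)\<close>. Hence \<open>P_k = (\<alpha>^k - \<beta>^k) / (\<alpha> - \<beta>)\<close> for
  \<open>\<alpha> = a\<^sup>2\<close>, \<open>\<beta> = (1 - a)\<^sup>2\<close>, a Lucas sequence with \<open>\<alpha> + \<beta> = 1 - 12x\<close> and
  \<open>\<alpha>\<beta> = 36x\<^sup>2\<close>, so it has integer coefficients. With \<open>s = 2a - 1\<close>, i.e.
  \<open>s\<^sup>2 = 1 - 24x\<close>, the same identity reads \<open>4^k P_k = 2 \<Sum> (2k choose j) (1 - 24x)^((j - 1)/2)\<close>,
  summed over odd \<open>j\<close>. For \<open>2k = l + 1\<close> only \<open>j = 1\<close> and \<open>j = l\<close> survive modulo \<open>l\<close>,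
  and \<open>2^l \<equiv> 2 (mod l)\<close>.
\<close>

lemma sum_atMost_double_split:
  fixes k :: nat
  shows "(\<Sum>j\<le>2*k. f j) = (\<Sum>i\<le>k. f (2*i)) + (\<Sum>i<k. f (2*i+1))"
proof (induction k)
  case (Suc k)
  have "2 * Suc k = Suc (Suc (2*k))" by simp
  then show ?case using Suc by (simp add: algebra_simps)
qed simp

lemma binomial_even_odd:
  fixes r c :: "'a::comm_ring_1" and k :: nat
  defines "E \<equiv> (\<Sum>i\<le>k. of_nat ((2*k) choose (2*i)) * c^(2*i) * r^(2*k-2*i))"
    and "Od \<equiv> (\<Sum>i<k. of_nat ((2*k) choose (2*i+1)) * c^(2*i+1) * r^(2*k-(2*i+1)))"
  shows "(r + c)^(2*k) = E + Od" and "(r - c)^(2*k) = E - Od"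
proof -
  have "(r + c)^(2*k) = (\<Sum>j\<le>2*k. of_nat ((2*k) choose j) * c^j * r^(2*k-j))"
    using binomial_ring[of c r] by (simp add: add.commute)
  then show "(r + c)^(2*k) = E + Od"
    by (simp add: sum_atMost_double_split E_def Od_def)
  have "(r - c)^(2*k) = (\<Sum>j\<le>2*k. of_nat ((2*k) choose j) * (-c)^j * r^(2*k-j))"
    using binomial_ring[of "-c" r] by simp
  then show "(r - c)^(2*k) = E - Od"
    by (simp add: sum_atMost_double_split E_def Od_def sum_negf)
qed

text \<open>
  The weight of \<open>P (k - i)\<close> in the recurrence. Through truncated subtraction,
  \<open>2 ^ (2 * 0 - 1) = 1\<close>, its \<open>i = 0\<close> instance is the constant \<open>(2k - 1)(k - 1)\<close>, so the
  recurrence becomes \<open>\<Sum>i<k. P_weight k i * P (k - i) = 0\<close>.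
\<close>
definition P_weight :: "nat \<Rightarrow> nat \<Rightarrow> rat poly" where
  "P_weight k i =
     [:0, 6 * of_nat ((2 * k) choose (2 * i)) * (2 ^ (2 * i - 1) - 1):]
     + [: of_nat ((2 * k) choose (2 * i + 2)) * (2 ^ (2 * i + 1) - 1)
          - 2 ^ (2 * i) * of_nat ((2 * k) choose (2 * i + 1))
          + of_nat ((2 * k) choose (2 * i)) :]"

lemma P_weight_sum_closed_form:
  fixes r x :: rat
  assumes rx: "r * (1 - r) = 6 * x"
  shows "(\<Sum>i\<le>m. poly (P_weight m i) x * r^(2*(m-i)))
    = (r * (r-2)^(2*m) + (1-r) * (r+1)^(2*m) + r^(2*m+1) + (1-r)^(2*m+1)) / 2"
proof -
  define ev where "ev c i = of_nat ((2*m) choose (2*i)) * c^(2*i) * r^(2*m-2*i)" for c :: rat and i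
  define od where "od c i = of_nat ((2*m) choose (2*i+1)) * c^(2*i+1) * r^(2*m-(2*i+1))" for c :: rat and i
  define g where "g i = of_nat ((2*m) choose (2*i)) * (2^(2*i-1) - 1) * r^(2*m-2*i)" for i
  define E where "E c = (\<Sum>i\<le>m. ev c i)" for c
  define Od where "Od c = (\<Sum>i<m. od c i)" for c
  have E: "E c = ((r+c)^(2*m) + (r-c)^(2*m)) / 2" and Od: "Od c = ((r+c)^(2*m) - (r-c)^(2*m)) / 2" for c
    using binomial_even_odd[of r c m] by (simp_all add: E_def Od_def ev_def od_def)
  have summand: "poly (P_weight m i) x * r^(2*(m-i)) = 6*x * g i + r^2 * g (i+1) - r/2 * od 2 i + ev 1 i"
    if "i \<le> m" for i
  proof (cases "i = m")
    case True
    then show ?thesis by (simp add: P_weight_def g_def od_def ev_def binomial_eq_0 algebra_simps)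
  next
    case False
    define n where "n = m - Suc i"
    have n: "2*(m-i) = Suc (Suc (2*n))" "2*m - 2*i = Suc (Suc (2*n))"
      "2*m - 2*(i+1) = 2*n" "2*m - (2*i+1) = Suc (2*n)"
      using False that by (simp_all add: n_def)
    show ?thesis
      unfolding P_weight_def g_def od_def ev_def n
      by (simp add: n field_simps power2_eq_square)
  qed
  have g_shift: "(\<Sum>i\<le>m. g (i+1)) = (\<Sum>i\<le>m. g i)"
    using sum.atMost_Suc_shift[of g m] by (simp add: g_def binomial_eq_0)
  have od_last: "(\<Sum>i\<le>m. od 2 i) = Od 2"
    by (simp add: Od_def od_def binomial_eq_0 flip: lessThan_Suc_atMost)
  have "(2::rat)^(2*i-1) = 2^(2*i) / 2" if "i \<noteq> 0" for i
    using that by (cases i) simp_all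
  then have "g i = ev 2 i / 2 - ev 1 i + (if i = 0 then r^(2*m) / 2 else 0)" for i
    by (simp add: g_def ev_def algebra_simps)
  then have G: "(\<Sum>i\<le>m. g i) = E 2 / 2 - E 1 + r^(2*m) / 2"
    by (simp add: E_def sum.distrib sum_subtractf sum_divide_distrib)
  have r2: "6*x + r^2 = r"
    using rx by (simp add: algebra_simps power2_eq_square)
  have pow: "r^(2*m+1) = r * r^(2*m)" "(1-r)^(2*m+1) = (1-r) * (r-1)^(2*m)"
    by (simp_all add: power_mult power2_commute)
  have "(\<Sum>i\<le>m. poly (P_weight m i) x * r^(2*(m-i)))
      = (\<Sum>i\<le>m. 6*x * g i + r^2 * g (i+1) - r/2 * od 2 i + ev 1 i)"
    by (rule sum.cong) (simp_all add: summand)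
  also have "\<dots> = 6*x * (\<Sum>i\<le>m. g i) + r^2 * (\<Sum>i\<le>m. g (i+1)) - r/2 * (\<Sum>i\<le>m. od 2 i) + E 1"
    by (simp only: sum.distrib sum_subtractf sum_distrib_left E_def)
  also have "\<dots> = (6*x + r^2) * (\<Sum>i\<le>m. g i) - r/2 * Od 2 + E 1"
    by (simp only: g_shift od_last distrib_right)
  also have "\<dots> = r * (E 2 / 2 - E 1 + r^(2*m) / 2) - r/2 * Od 2 + E 1"
    by (simp only: r2 G)
  also have "\<dots> = (r * (r-2)^(2*m) + (1-r) * (r+1)^(2*m) + r^(2*m+1) + (1-r)^(2*m+1)) / 2"
    unfolding E Od pow by (simp add: field_simps)
  finally show ?thesis .
qed

lemma P_weight_sum_reflect:
  fixes a x :: rat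
  assumes ax: "a * (1 - a) = 6 * x"
  shows "(\<Sum>i\<le>m. poly (P_weight m i) x * a^(2*(m-i)))
       = (\<Sum>i\<le>m. poly (P_weight m i) x * (1-a)^(2*(m-i)))"
proof -
  have "(1 - a - 2)^2 = (a+1)^2" "(1 - a + 1)^2 = (a-2)^2"
    by (simp_all add: power2_eq_square algebra_simps)
  then have pow: "(1 - a - 2)^(2*m) = (a+1)^(2*m)" "(1 - a + 1)^(2*m) = (a-2)^(2*m)"
    by (simp_all only: power_mult)
  have "(1 - a) * (1 - (1 - a)) = 6 * x" using ax by (simp add: algebra_simps)
  from P_weight_sum_closed_form[OF this, of m, unfolded pow]
  have "(\<Sum>i\<le>m. poly (P_weight m i) x * (1-a)^(2*(m-i)))
      = ((1-a) * (a+1)^(2*m) + a * (a-2)^(2*m) + (1-a)^(2*m+1) + a^(2*m+1)) / 2"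
    by simp
  then show ?thesis
    unfolding P_weight_sum_closed_form[OF ax] by (simp add: algebra_simps)
qed

lemma P_weight_0:
  assumes "1 \<le> k"
  shows "P_weight k 0 = [:of_nat (2*k - 1) * of_nat (k - 1):]"
proof -
  have "(2*k) choose 2 = k * (2*k - 1)" by (simp add: choose_two)
  then have "of_nat ((2*k) choose Suc (Suc 0)) = (of_nat k * (2 * of_nat k - 1) :: rat)"
    using assms by (simp add: numeral_2_eq_2)
  then show ?thesis using assms by (simp add: P_weight_def algebra_simps)
qed

declare P.simps [simp del]

lemma P_recurrence:
  assumes k: "2 \<le> k"
  shows "(\<Sum>i<k. P_weight k i * P (k - i)) = 0"
proof -
  define D :: rat where "D = of_nat (2*k - 1) * of_nat (k - 1)"
  define S where "S = (\<Sum>i = 1..k-1. P_weight k i * P (k - i))"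
  have D: "D \<noteq> 0" using k by (simp add: D_def)
  have W0: "P_weight k 0 = [:D:]" using P_weight_0 k by (simp add: D_def)
  have "P k = smult (- 1 / D) S"
    using k by (subst P.simps) (simp add: D_def S_def P_weight_def)
  moreover have "{..<k} - {0} = {1..k-1}" using k by auto
  then have "(\<Sum>i<k. P_weight k i * P (k - i)) = P_weight k 0 * P k + S"
    using k by (simp add: S_def sum.remove[of "{..<k}" 0])
  ultimately show ?thesis
    using D by (simp add: W0)
qed

lemma poly_P_param:
  fixes a :: rat
  shows "(2*a - 1) * poly (P m) (a * (1 - a) / 6) = a^(2*m) - (1-a)^(2*m)"
proof (induction m rule: less_induct)
  case (less m)
  define x where "x = a * (1 - a) / 6"
  define L where "L n = a^(2*n) - (1-a)^(2*n)" for n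
  define w where "w i = poly (P_weight m i) x" for i
  consider "m = 0" | "m = 1" | "2 \<le> m" by linarith
  then show ?case
  proof cases
    case 1 then show ?thesis by (simp add: P.simps)
  next
    case 2 then show ?thesis by (simp add: P.simps algebra_simps power2_eq_square)
  next
    case 3
    have "(\<Sum>i\<le>m. w i * L (m-i)) = 0"
      using P_weight_sum_reflect[of a x m] by (simp add: w_def L_def x_def algebra_simps sum_subtractf)
    then have "(\<Sum>i<m. w i * L (m-i)) = 0"
      by (simp add: L_def flip: lessThan_Suc_atMost)
    moreover have "(\<Sum>i<m. w i * ((2*a - 1) * poly (P (m-i)) x))
        = (2*a - 1) * poly (\<Sum>i<m. P_weight m i * P (m - i)) x"
      by (simp add: w_def poly_sum sum_distrib_left mult.left_commute)
    then have "(\<Sum>i<m. w i * ((2*a - 1) * poly (P (m-i)) x)) = 0"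
      by (simp add: P_recurrence[OF 3])
    ultimately have "(\<Sum>i<m. w i * ((2*a - 1) * poly (P (m-i)) x - L (m-i))) = 0"
      by (simp add: right_diff_distrib sum_subtractf)
    moreover have "(\<Sum>i<m. w i * ((2*a - 1) * poly (P (m-i)) x - L (m-i)))
        = w 0 * ((2*a - 1) * poly (P m) x - L m)"
      \<comment> \<open>the induction hypothesis kills every term but \<open>i = 0\<close>\<close>
      using 3 by (subst sum.remove[of _ 0]) (auto simp: less.IH x_def L_def intro!: sum.neutral)
    moreover have "w 0 \<noteq> 0"
      using 3 by (simp add: w_def P_weight_0)
    ultimately have "(2*a - 1) * poly (P m) x = L m" by simp
    then show ?thesis by (simp only: x_def L_def)
  qed
qed

lemma poly_eq_on_infinite:
  fixes p q :: "'a::idom poly"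
  assumes "infinite A" and "\<And>x. x \<in> A \<Longrightarrow> poly p x = poly q x"
  shows "p = q"
proof (rule ccontr)
  assume "p \<noteq> q"
  then have "finite {x. poly (p - q) x = 0}" by (intro poly_roots_finite) simp
  moreover have "A \<subseteq> {x. poly (p - q) x = 0}" using assms(2) by auto
  ultimately show False using assms(1) finite_subset by blast
qed

lemma poly_eq_by_param:
  fixes p q :: "rat poly"
  assumes "\<And>a. (2*a - 1) * poly p (a * (1 - a) / 6) = (2*a - 1) * poly q (a * (1 - a) / 6)"
  shows "p = q"
proof (rule poly_eq_on_infinite)
  define f :: "nat \<Rightarrow> rat" where "f n = - of_nat (n * (1 + n)) / 6" for n
  have mono: "strict_mono (\<lambda>n::nat. n * (1 + n))"
    unfolding strict_mono_Suc_iff by simp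
  have "inj f"
  proof (rule injI)
    fix m n assume "f m = f n"
    then have "m * (1 + m) = n * (1 + n)" by (simp add: f_def del: of_nat_mult of_nat_add)
    then show "m = n" using strict_mono_eq[OF mono, of m n] by simp
  qed
  then show "infinite (range f)" by (rule range_inj_infinite)
  fix x assume "x \<in> range f"
  then obtain n where "x = f n" by blast
  then have x: "x = - of_nat n * (1 - - of_nat n) / 6"
    by (simp add: f_def algebra_simps)
  have "2 * (- of_nat n) - 1 \<noteq> (0::rat)"
    using of_nat_0_le_iff[of n] by linarith
  moreover have "(2 * (- of_nat n) - 1) * poly p x = (2 * (- of_nat n) - 1) * poly q x"
    unfolding x by (rule assms)
  ultimately show "poly p x = poly q x" by simp
qed

fun P_lucas :: "nat \<Rightarrow> rat poly" where
  "P_lucas 0 = 0"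
| "P_lucas (Suc 0) = 1"
| "P_lucas (Suc (Suc m)) = [:1, -12:] * P_lucas (Suc m) - [:0, 0, 36:] * P_lucas m"

lemma poly_P_lucas_param:
  fixes a :: rat
  shows "(2*a - 1) * poly (P_lucas m) (a * (1 - a) / 6) = a^(2*m) - (1-a)^(2*m)"
proof (induction m rule: P_lucas.induct)
  case (3 m)
  define x where "x = a * (1 - a) / 6"
  define u where "u = a^2"
  define v where "v = (1 - a)^2"
  have uv: "u + v = 1 - 12 * x" "u * v = 36 * x^2"
    by (simp_all add: u_def v_def x_def power2_eq_square field_simps)
  have IH: "(2*a - 1) * poly (P_lucas (Suc m)) x = u^(m+1) - v^(m+1)"
      "(2*a - 1) * poly (P_lucas m) x = u^m - v^m"
    using 3 unfolding x_def u_def v_def power_mult[symmetric] by simp_all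
  have "(2*a - 1) * poly (P_lucas (Suc (Suc m))) x
      = (u + v) * ((2*a - 1) * poly (P_lucas (Suc m)) x) - u * v * ((2*a - 1) * poly (P_lucas m) x)"
    by (simp add: uv algebra_simps power2_eq_square)
  also have "\<dots> = (u + v) * (u^(m+1) - v^(m+1)) - u * v * (u^m - v^m)"
    by (simp only: IH)
  also have "\<dots> = u^(m+2) - v^(m+2)"
    by (simp add: algebra_simps)
  finally show ?case
    unfolding x_def u_def v_def power_mult[symmetric] by simp
qed (simp_all add: algebra_simps power2_eq_square)

lemma P_eq_P_lucas: "P m = P_lucas m"
  by (rule poly_eq_by_param) (simp only: poly_P_param poly_P_lucas_param)

definition int_coeffs :: "rat poly \<Rightarrow> bool" where
  "int_coeffs p \<longleftrightarrow> (\<forall>n. coeff p n \<in> \<int>)"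

lemma int_coeffs_0: "int_coeffs 0"
  by (simp add: int_coeffs_def)

lemma int_coeffs_1: "int_coeffs 1"
  by (simp add: int_coeffs_def)

lemma int_coeffs_pCons: "a \<in> \<int> \<Longrightarrow> int_coeffs p \<Longrightarrow> int_coeffs (pCons a p)"
  by (simp add: int_coeffs_def coeff_pCons split: nat.split)

lemma int_coeffs_add: "int_coeffs p \<Longrightarrow> int_coeffs q \<Longrightarrow> int_coeffs (p + q)"
  by (simp add: int_coeffs_def)

lemma int_coeffs_diff: "int_coeffs p \<Longrightarrow> int_coeffs q \<Longrightarrow> int_coeffs (p - q)"
  by (simp add: int_coeffs_def)

lemma int_coeffs_smult: "c \<in> \<int> \<Longrightarrow> int_coeffs p \<Longrightarrow> int_coeffs (smult c p)"
  by (simp add: int_coeffs_def)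

lemma int_coeffs_mult: "int_coeffs p \<Longrightarrow> int_coeffs q \<Longrightarrow> int_coeffs (p * q)"
  by (auto simp: int_coeffs_def coeff_mult)

lemma int_coeffs_power: "int_coeffs p \<Longrightarrow> int_coeffs (p ^ n)"
  by (induction n) (auto intro: int_coeffs_1 int_coeffs_mult)

lemma int_coeffs_sum: "(\<And>i. i \<in> A \<Longrightarrow> int_coeffs (f i)) \<Longrightarrow> int_coeffs (\<Sum>i\<in>A. f i)"
  by (auto simp: int_coeffs_def coeff_sum)

lemma int_coeffs_P: "int_coeffs (P m)"
proof -
  have "int_coeffs [:1, -12:]" "int_coeffs [:0, 0, 36:]"
    by (intro int_coeffs_pCons int_coeffs_0; simp)+
  then have "int_coeffs (P_lucas m)"
  proof (induction m rule: P_lucas.induct)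
    case (3 m)
    then show ?case unfolding P_lucas.simps by (intro int_coeffs_diff int_coeffs_mult)
  qed (simp_all add: int_coeffs_0 int_coeffs_1)
  then show ?thesis by (simp add: P_eq_P_lucas)
qed

definition odd_binomial_poly :: "nat \<Rightarrow> rat poly" where
  "odd_binomial_poly n = (\<Sum>j\<in>{j\<in>{..n}. odd j}. smult (of_nat (n choose j)) ([:1, -24:] ^ (j div 2)))"

lemma binomial_diff_odd_terms:
  fixes s :: "'a::comm_ring_1"
  shows "(1 + s)^n - (1 - s)^n = 2 * (\<Sum>j\<in>{j\<in>{..n}. odd j}. of_nat (n choose j) * s^j)"
proof -
  have "(1 + s)^n = (\<Sum>j\<le>n. of_nat (n choose j) * s^j)"
    using binomial_ring[of s 1 n] by (simp add: add.commute)
  moreover have "(1 - s)^n = (\<Sum>j\<le>n. of_nat (n choose j) * (-s)^j)"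
    using binomial_ring[of "-s" 1 n] by simp
  ultimately have "(1 + s)^n - (1 - s)^n
      = (\<Sum>j\<le>n. of_nat (n choose j) * s^j - of_nat (n choose j) * (-s)^j)"
    by (simp only: sum_subtractf)
  also have "\<dots> = (\<Sum>j\<le>n. if odd j then 2 * (of_nat (n choose j) * s^j) else 0)"
    by (rule sum.cong) (simp_all add: algebra_simps)
  also have "\<dots> = 2 * (\<Sum>j\<in>{j\<in>{..n}. odd j}. of_nat (n choose j) * s^j)"
    by (simp only: sum_distrib_left sum.inter_filter[OF finite_atMost]
        if_distrib[of "(*) 2"] mult_zero_right)
  finally show ?thesis .
qed

lemma poly_odd_binomial_poly:
  fixes s :: rat
  shows "2 * s * poly (odd_binomial_poly n) ((1 - s^2) / 24) = (1 + s)^n - (1 - s)^n"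
proof -
  have "poly [:1, -24:] ((1 - s^2) / 24) = s^2" by (simp add: field_simps)
  then have "2 * s * poly (odd_binomial_poly n) ((1 - s^2) / 24)
      = 2 * (\<Sum>j\<in>{j\<in>{..n}. odd j}. of_nat (n choose j) * (s * (s^2)^(j div 2)))"
    by (simp add: odd_binomial_poly_def poly_sum sum_distrib_left mult_ac)
  also have "\<dots> = 2 * (\<Sum>j\<in>{j\<in>{..n}. odd j}. of_nat (n choose j) * s^j)"
    by (intro arg_cong[where f = "(*) 2"] sum.cong) (auto elim!: oddE simp: power_mult)
  finally show ?thesis by (simp only: binomial_diff_odd_terms)
qed

lemma P_odd_binomial: "smult (2^(2*m)) (P m) = smult 2 (odd_binomial_poly (2*m))"
proof (rule poly_eq_by_param)
  fix a :: rat
  have x: "a * (1 - a) / 6 = (1 - (2*a - 1)^2) / 24"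
    by (simp add: power2_eq_square field_simps)
  have two: "1 + (2*a - 1) = 2 * a" "1 - (2*a - 1) = 2 * (1 - a)"
    by simp_all
  have "(2*a - 1) * poly (smult 2 (odd_binomial_poly (2*m))) (a * (1 - a) / 6)
      = 2 * (2*a - 1) * poly (odd_binomial_poly (2*m)) ((1 - (2*a - 1)^2) / 24)"
    unfolding x poly_smult by (simp only: mult_ac)
  also have "\<dots> = (1 + (2*a - 1))^(2*m) - (1 - (2*a - 1))^(2*m)"
    by (rule poly_odd_binomial_poly)
  also have "\<dots> = 2^(2*m) * (a^(2*m) - (1 - a)^(2*m))"
    unfolding two power_mult_distrib by (rule right_diff_distrib[symmetric])
  also have "\<dots> = (2*a - 1) * poly (smult (2^(2*m)) (P m)) (a * (1 - a) / 6)"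
    unfolding poly_smult poly_P_param[symmetric] by (rule mult.left_commute)
  finally show "(2*a - 1) * poly (smult (2^(2*m)) (P m)) (a * (1 - a) / 6)
      = (2*a - 1) * poly (smult 2 (odd_binomial_poly (2*m))) (a * (1 - a) / 6)" ..
qed

lemma prime_dvd_two_power_minus_two:
  assumes "prime (l::nat)"
  shows "l dvd 2^l - 2"
proof -
  have l: "l \<noteq> 0" using assms by auto
  have "2^l = (\<Sum>k\<le>l. l choose k)" by (simp add: choose_row_sum)
  also have "\<dots> = (l choose 0) + (l choose l) + (\<Sum>k\<in>{..l} - {0, l}. l choose k)"
    using l by (simp add: sum.remove[of "{..l}" 0] sum.remove[of "{..l} - {0}" l] Diff_insert2[symmetric])
  finally have "2^l - 2 = (\<Sum>k\<in>{..l} - {0, l}. l choose k)" by simp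
  also have "l dvd \<dots>"
    using assms l by (intro dvd_sum dvd_choose_prime) auto
  finally show ?thesis .
qed

lemma prime_dvd_Suc_choose:
  assumes "prime l" and "2 \<le> j" and "j < l"
  shows "l dvd (Suc l choose j)"
proof -
  obtain i where j: "j = Suc i" using assms(2) by (cases j) auto
  have "l dvd (l choose i)" and "l dvd (l choose j)"
    using assms by (auto intro!: dvd_choose_prime simp: j)
  then show ?thesis by (simp add: j)
qed

lemma smult_sum_right: "smult c (\<Sum>i\<in>A. f i) = (\<Sum>i\<in>A. smult c (f i))"
  by (induction A rule: infinite_finite_induct) (simp_all add: smult_add_right)

lemma odd_binomial_poly_Suc_prime:
  assumes "prime l" and "odd l"
  shows "\<exists>R. int_coeffs R \<and> odd_binomial_poly (Suc l)
    = smult (of_nat (Suc l)) (1 + [:1, -24:] ^ (l div 2)) + smult (of_nat l) R"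
proof -
  define f where "f j = smult (of_nat (Suc l choose j)) ([:1, -24:] ^ (j div 2) :: rat poly)" for j
  define J where "J = {j\<in>{..Suc l}. odd j} - {1, l}"
  define R :: "rat poly"
    where "R = (\<Sum>j\<in>J. smult (of_nat ((Suc l choose j) div l)) ([:1, -24:] ^ (j div 2)))"
  have l: "1 < l" using assms(1) by (rule prime_gt_1_nat)
  have odds: "{j\<in>{..Suc l}. odd j} = insert 1 (insert l J)"
    using l assms(2) by (auto simp: J_def)
  have "1 \<notin> insert l J" and "l \<notin> J" and "finite J"
    using l by (auto simp: J_def)
  then have "odd_binomial_poly (Suc l) = f 1 + f l + (\<Sum>j\<in>J. f j)"
    unfolding odd_binomial_poly_def odds f_def[symmetric] by (simp add: add.assoc)
  also have "f 1 + f l = smult (of_nat (Suc l)) (1 + [:1, -24:] ^ (l div 2))"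
    by (simp add: f_def smult_add_right)
  also have "(\<Sum>j\<in>J. f j) = smult (of_nat l) R"
    unfolding R_def smult_sum_right
  proof (rule sum.cong)
    fix j assume "j \<in> J"
    with l assms(2) have "2 \<le> j" and "j < l"
      by (auto simp: J_def elim!: oddE)
    with assms(1) have "Suc l choose j = l * ((Suc l choose j) div l)"
      by (simp add: prime_dvd_Suc_choose)
    then show "f j = smult (of_nat l) (smult (of_nat ((Suc l choose j) div l)) ([:1, -24:] ^ (j div 2)))"
      unfolding f_def by (metis of_nat_mult smult_smult)
  qed simp
  moreover have "int_coeffs R"
    unfolding R_def
    by (intro int_coeffs_sum int_coeffs_smult int_coeffs_power int_coeffs_pCons int_coeffs_0) auto
  ultimately show ?thesis by (intro exI[of _ R]) simp
qed

lemma dvd_coeff_of_double: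
  assumes "int_coeffs E" and "int_coeffs Z" and "odd l" and "smult 2 E = smult (of_nat l) Z"
  shows "\<exists>c::int. coeff E n = of_int (int l * c)"
proof -
  obtain e z where e: "coeff E n = of_int e" and z: "coeff Z n = of_int z"
    using assms(1,2) unfolding int_coeffs_def by (metis Ints_cases)
  have "2 * coeff E n = of_nat l * coeff Z n"
    using arg_cong[OF assms(4), of "\<lambda>p. coeff p n"] by simp
  then have "of_int (2 * e) = (of_int (int l * z) :: rat)" by (simp add: e z)
  then have "2 * e = int l * z" by (simp only: of_int_eq_iff)
  then have "int l dvd 2 * e" by (rule dvdI)
  with assms(3) have "int l dvd e"
    by (simp add: coprime_dvd_mult_right_iff)
  then show ?thesis by (auto simp: e)
qed

lemma P_half_prime_congruence:
  assumes "prime l" and "3 < l"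
  shows "\<exists>c::int. coeff (P ((l + 1) div 2)
      - smult (of_nat ((l + 1) div 2)) (1 + [:1, -24:] ^ ((l - 1) div 2))) n = of_int (int l * c)"
proof -
  define k where "k = (l + 1) div 2"
  define Y where "Y = (1 + [:1, -24:] ^ ((l - 1) div 2) :: rat poly)"
  have odd: "odd l" using assms by (simp add: prime_odd_nat)
  then have lk: "2 * k = Suc l" and "l div 2 = (l - 1) div 2"
    by (auto simp: k_def elim!: oddE)
  then obtain R where R: "int_coeffs R" "odd_binomial_poly (Suc l) = smult (of_nat (Suc l)) Y + smult (of_nat l) R"
    using odd_binomial_poly_Suc_prime[OF assms(1) odd] by (auto simp: Y_def)
  obtain t where t: "2^l - 2 = l * t"
    using prime_dvd_two_power_minus_two[OF assms(1)] unfolding dvd_def by blast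
  have "(2::nat) \<le> 2^l" using assms(2) by (simp add: self_le_power)
  then have two_pow: "(2::rat)^l = 2 + of_nat l * of_nat t"
    using t by (metis add_diff_inverse_nat not_less of_nat_add of_nat_mult of_nat_numeral of_nat_power)
  have "smult 2 (smult (2^l) (P k)) = smult 2 (smult (of_nat (Suc l)) Y + smult (of_nat l) R)"
    using P_odd_binomial[of k] by (simp add: lk R(2))
  then have scaled: "smult (2^l) (P k) = smult (of_nat (Suc l)) Y + smult (of_nat l) R"
    by (rule smult_cancel[rotated]) simp
  have "(of_nat (Suc l) :: rat) = 2 * of_nat k"
    by (metis lk of_nat_mult of_nat_numeral)
  then have "smult 2 (P k - smult (of_nat k) Y) = smult 2 (P k) - smult (of_nat (Suc l)) Y"
    by (simp add: smult_diff_right)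
  also have "\<dots> = smult 2 (P k) - smult (2^l) (P k) + smult (of_nat l) R"
    by (simp add: scaled)
  also have "\<dots> = smult (of_nat l) (R - smult (of_nat t) (P k))"
    by (simp add: two_pow smult_add_left smult_diff_right)
  finally have "smult 2 (P k - smult (of_nat k) Y) = smult (of_nat l) (R - smult (of_nat t) (P k))" .
  moreover have "int_coeffs (P k - smult (of_nat k) Y)"
    unfolding Y_def
    by (intro int_coeffs_diff int_coeffs_P int_coeffs_smult int_coeffs_add int_coeffs_1 int_coeffs_power
        int_coeffs_pCons int_coeffs_0) auto
  moreover have "int_coeffs (R - smult (of_nat t) (P k))"
    using R(1) by (intro int_coeffs_diff int_coeffs_smult int_coeffs_P) auto
  ultimately show ?thesis
    unfolding k_def[symmetric] Y_def[symmetric] using dvd_coeff_of_double odd by blast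
qed

theorem corollary7p2:
  shows "(\<forall>k \<ge> 2. \<forall>n. coeff (P k) n \<in> \<int>)
    \<and> (\<forall>l::nat. prime l \<and> l > 3 \<longrightarrow>
         (\<forall>n. \<exists>c::int.
            coeff (P ((l + 1) div 2)
                   - smult (of_nat ((l + 1) div 2)) (1 + [:1, -24:] ^ ((l - 1) div 2))) n
            = of_int (int l * c)))"
  using int_coeffs_P P_half_prime_congruence unfolding int_coeffs_def by blast

end
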